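(* Let $K$ be a finite field, $G$ a finite group and $C$ a two-sided ideal of $KG$ such that the quotient algebra $KG/C$ is a Frobenius algebra. Then $C$ is checkable (as a right ideal). In particular the Jacobson radical $J(KG)$ is checkable.
   Context: A right ideal $I\le KG$ is called checkable if there is $v\in KG$ with $I=\{a\in KG: va=0\}$. A Frobenius algebra is a finite-dimensional $K$-algebra $A$ admitting a $K$-linear map $\lambda:A\to K$ whose kernel contains no nonzero left or right ideal. *)

theory Defs
  imports "HOL-Algebra.Group"
begin

text \<open>The group algebra KG of a finite group G over a field K: K-valued functions
  on the carrier of G, vanishing outside the carrier, with convolution product.\<close>

definition ga_carrier :: "('g, 'b) monoid_scheme \<Rightarrow> ('g \<Rightarrow> 'k::field) set" where
  "ga_carrier G = {a. \<forall>x. x \<notin> carrier G \<longrightarrow> a x = 0}"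

definition ga_mult :: "('g, 'b) monoid_scheme \<Rightarrow> ('g \<Rightarrow> 'k::field) \<Rightarrow> ('g \<Rightarrow> 'k) \<Rightarrow> ('g \<Rightarrow> 'k)" where
  "ga_mult G a b = (\<lambda>g. if g \<in> carrier G
       then (\<Sum>h\<in>carrier G. a h * b (inv\<^bsub>G\<^esub> h \<otimes>\<^bsub>G\<^esub> g)) else 0)"

definition ga_additive_subgroup :: "('g, 'b) monoid_scheme \<Rightarrow> ('g \<Rightarrow> 'k::field) set \<Rightarrow> bool" where
  "ga_additive_subgroup G I \<longleftrightarrow> I \<subseteq> ga_carrier G \<and> (\<lambda>_. 0) \<in> I \<and>
     (\<forall>a\<in>I. \<forall>b\<in>I. (\<lambda>g. a g + b g) \<in> I) \<and> (\<forall>a\<in>I. (\<lambda>g. - a g) \<in> I)"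

definition ga_right_ideal :: "('g, 'b) monoid_scheme \<Rightarrow> ('g \<Rightarrow> 'k::field) set \<Rightarrow> bool" where
  "ga_right_ideal G I \<longleftrightarrow> ga_additive_subgroup G I \<and>
     (\<forall>a\<in>I. \<forall>x\<in>ga_carrier G. ga_mult G a x \<in> I)"

definition ga_left_ideal :: "('g, 'b) monoid_scheme \<Rightarrow> ('g \<Rightarrow> 'k::field) set \<Rightarrow> bool" where
  "ga_left_ideal G I \<longleftrightarrow> ga_additive_subgroup G I \<and>
     (\<forall>a\<in>I. \<forall>x\<in>ga_carrier G. ga_mult G x a \<in> I)"

definition ga_ideal :: "('g, 'b) monoid_scheme \<Rightarrow> ('g \<Rightarrow> 'k::field) set \<Rightarrow> bool" where
  "ga_ideal G I \<longleftrightarrow> ga_left_ideal G I \<and> ga_right_ideal G I"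

definition checkable :: "('g, 'b) monoid_scheme \<Rightarrow> ('g \<Rightarrow> 'k::field) set \<Rightarrow> bool" where
  "checkable G I \<longleftrightarrow> (\<exists>v\<in>ga_carrier G. I = {a\<in>ga_carrier G. ga_mult G v a = (\<lambda>_. 0)})"

definition ga_linear :: "('g, 'b) monoid_scheme \<Rightarrow> (('g \<Rightarrow> 'k::field) \<Rightarrow> 'k) \<Rightarrow> bool" where
  "ga_linear G l \<longleftrightarrow> (\<forall>a\<in>ga_carrier G. \<forall>b\<in>ga_carrier G. l (\<lambda>g. a g + b g) = l a + l b) \<and>
     (\<forall>c. \<forall>a\<in>ga_carrier G. l (\<lambda>g. c * a g) = c * l a)"

text \<open>K-linear maps KG/C \<rightarrow> K are exactly the K-linear maps
  KG \<rightarrow> K vanishing on C, and (correspondence theorem) the left/right ideals of KG/C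
  are exactly L/C for left/right ideals L of KG containing C; L/C is nonzero iff L \<noteq> C,
  and L/C lies in the kernel iff the functional vanishes on L.  (KG/C is automatically
  finite-dimensional.)\<close>
definition frobenius_quotient :: "('g, 'b) monoid_scheme \<Rightarrow> ('g \<Rightarrow> 'k::field) set \<Rightarrow> bool" where
  "frobenius_quotient G C \<longleftrightarrow> (\<exists>l. ga_linear G l \<and> (\<forall>c\<in>C. l c = 0) \<and>
     (\<forall>L. ga_left_ideal G L \<and> C \<subseteq> L \<and> (\<forall>a\<in>L. l a = 0) \<longrightarrow> L = C) \<and>
     (\<forall>L. ga_right_ideal G L \<and> C \<subseteq> L \<and> (\<forall>a\<in>L. l a = 0) \<longrightarrow> L = C))"

definition ga_maximal_right_ideal :: "('g, 'b) monoid_scheme \<Rightarrow> ('g \<Rightarrow> 'k::field) set \<Rightarrow> bool" where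
  "ga_maximal_right_ideal G M \<longleftrightarrow> ga_right_ideal G M \<and> M \<noteq> ga_carrier G \<and>
     (\<forall>N. ga_right_ideal G N \<and> M \<subseteq> N \<longrightarrow> N = M \<or> N = ga_carrier G)"

definition ga_jacobson :: "('g, 'b) monoid_scheme \<Rightarrow> ('g \<Rightarrow> 'k::field) set" where
  "ga_jacobson G = ga_carrier G \<inter> \<Inter>{M. ga_maximal_right_ideal G M}"

end

theory Submission
  imports Defs "HOL-Library.Function_Algebras" "HOL-Library.Set_Algebras" "HOL.Vector_Spaces"
begin

(* Let l be a linear form on KG that vanishes on the right ideal C but on no larger right ideal,
   and put v(g) = l(delta_(g^-1)). Then (v a)(g) = l(a delta_(g^-1)), so the right annihilator of v
   is a right ideal containing C on which l vanishes; hence it is C.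

   For C = J(KG) such a form exists because KG/J is semisimple. Since KG is finite, one can
   repeatedly split off a minimal right ideal of KG/J together with a complement, which writes 1
   modulo J as a sum of orthogonal idempotents e, each generating a minimal right ideal of KG/J.
   Choose forms l_e vanishing on J with l_e(e) = 1 and put l(x) = sum_e l_e(e x e). If r is not
   in J, then neither is some e r e', and minimality of e KG/J yields b with l(r b) = 1. *)

lemma vector_space_field_mult: "vector_space ((*) :: 'a::field \<Rightarrow> 'a \<Rightarrow> 'a)"
  by unfold_locales (simp_all add: algebra_simps)

lemma vector_space_fun_scale: "vector_space (\<lambda>c (f :: 'a \<Rightarrow> 'k::field) x. c * f x)"
  by unfold_locales (simp_all add: fun_eq_iff algebra_simps)

lemma (in vector_space) subspace_separating_functional:
  assumes "subspace J" and "e \<notin> J"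
  obtains f :: "'b \<Rightarrow> 'a" where "Vector_Spaces.linear scale (*) f" "\<forall>x\<in>J. f x = 0" "f e = 1"
proof -
  interpret pair: vector_space_pair scale "(*) :: 'a \<Rightarrow> 'a \<Rightarrow> 'a"
    by (intro vector_space_pair.intro vector_space_axioms vector_space_field_mult)
  obtain B where B: "B \<subseteq> J" "independent B" "J \<subseteq> span B"
    using maximal_independent_subset by blast
  have span_B: "span B = J"
    using B \<open>subspace J\<close> span_minimal by blast
  have indep: "independent (insert e B)"
    using independent_insertI B(2) \<open>e \<notin> J\<close> span_B by blast
  define f where "f = pair.construct (insert e B) (\<lambda>x. if x = e then 1 else 0)"
  have f_basis: "f x = (if x = e then 1 else 0)" if "x \<in> insert e B" for x
    unfolding f_def using pair.construct_basis[OF indep that] .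
  have lin: "Vector_Spaces.linear scale (*) f"
    unfolding f_def by (rule pair.linear_construct[OF indep])
  have "f x = 0" if "x \<in> B" for x
    using f_basis that B(1) \<open>e \<notin> J\<close> by auto
  then have "f x = 0" if "x \<in> J" for x
    using pair.linear_eq_0_on_span[OF lin] span_B that by blast
  with lin f_basis show thesis
    using that by auto
qed

section \<open>The group algebra\<close>

lemma sum_fun_apply: "(\<Sum>i\<in>S. f i) x = (\<Sum>i\<in>S. f i x)"
  by (induction S rule: infinite_finite_induct) auto

lemma set_plus_subset_left: "0 \<in> B \<Longrightarrow> A \<subseteq> A + (B :: 'a::monoid_add set)"
  and set_plus_subset_right: "0 \<in> A \<Longrightarrow> B \<subseteq> A + (B :: 'a::monoid_add set)"
  by (metis add.right_neutral set_plus_intro subsetI, metis add.left_neutral set_plus_intro subsetI)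

definition ga_delta :: "'g \<Rightarrow> 'g \<Rightarrow> 'k::zero_neq_one" where
  "ga_delta h = (\<lambda>x. if x = h then 1 else 0)"

locale group_algebra = group +
  assumes finite_carrier: "finite (carrier G)"
begin

abbreviation KG :: "('a \<Rightarrow> 'k::field) set" where
  "KG \<equiv> ga_carrier G"

abbreviation conv :: "('a \<Rightarrow> 'k::field) \<Rightarrow> ('a \<Rightarrow> 'k) \<Rightarrow> ('a \<Rightarrow> 'k)" (infixl "\<star>" 70) where
  "a \<star> b \<equiv> ga_mult G a b"

abbreviation unit :: "'a \<Rightarrow> 'k::field" where
  "unit \<equiv> ga_delta \<one>"

lemma ga_mult_apply: "g \<in> carrier G \<Longrightarrow> (a \<star> b) g = (\<Sum>h\<in>carrier G. a h * b (inv h \<otimes> g))"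
  by (simp add: ga_mult_def)

lemma ga_mult_outside: "g \<notin> carrier G \<Longrightarrow> (a \<star> b) g = 0"
  by (simp add: ga_mult_def)

lemma ga_mult_closed [simp]: "a \<star> b \<in> KG"
  by (simp add: ga_carrier_def ga_mult_outside)

lemma ga_carrier_add [intro]: "a \<in> KG \<Longrightarrow> b \<in> KG \<Longrightarrow> a + b \<in> KG"
  and ga_carrier_uminus [intro]: "a \<in> KG \<Longrightarrow> - a \<in> KG"
  and ga_carrier_diff [intro]: "a \<in> KG \<Longrightarrow> b \<in> KG \<Longrightarrow> a - b \<in> KG"
  and ga_carrier_scale [intro]: "a \<in> KG \<Longrightarrow> (\<lambda>x. c * a x) \<in> KG"
  and ga_carrier_zero [simp]: "0 \<in> KG"
  and ga_carrier_delta [intro]: "h \<in> carrier G \<Longrightarrow> ga_delta h \<in> KG"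
  by (auto simp: ga_carrier_def ga_delta_def)

lemma ga_carrier_sum [intro]: "(\<And>i. i \<in> S \<Longrightarrow> f i \<in> KG) \<Longrightarrow> (\<Sum>i\<in>S. f i) \<in> KG"
  by (induction S rule: infinite_finite_induct) auto

lemma ga_mult_add_left: "(a + b) \<star> c = a \<star> c + b \<star> c"
  and ga_mult_add_right: "c \<star> (a + b) = c \<star> a + c \<star> b"
  and ga_mult_zero_left [simp]: "0 \<star> c = 0"
  and ga_mult_zero_right [simp]: "c \<star> 0 = 0"
  and ga_mult_minus_left: "(- a) \<star> c = - (a \<star> c)"
  and ga_mult_minus_right: "c \<star> (- a) = - (c \<star> a)"
  and ga_mult_scale_left: "(\<lambda>x. k * a x) \<star> c = (\<lambda>x. k * (a \<star> c) x)"
  and ga_mult_scale_right: "c \<star> (\<lambda>x. k * a x) = (\<lambda>x. k * (c \<star> a) x)"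
  by (auto simp: fun_eq_iff ga_mult_def sum.distrib sum_negf sum_distrib_left algebra_simps)

lemma ga_mult_diff_left: "(a - b) \<star> c = a \<star> c - b \<star> c"
  and ga_mult_diff_right: "c \<star> (a - b) = c \<star> a - c \<star> b"
  by (simp_all only: diff_conv_add_uminus ga_mult_add_left ga_mult_add_right
      ga_mult_minus_left ga_mult_minus_right)

lemma ga_mult_sum_left: "(\<Sum>i\<in>S. f i) \<star> c = (\<Sum>i\<in>S. f i \<star> c)"
  and ga_mult_sum_right: "c \<star> (\<Sum>i\<in>S. f i) = (\<Sum>i\<in>S. c \<star> f i)"
  by (induction S rule: infinite_finite_induct) (simp_all add: ga_mult_add_left ga_mult_add_right)

lemma ga_mult_assoc [simp]: "(a \<star> b) \<star> c = a \<star> (b \<star> c)"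
proof
  fix g
  show "((a \<star> b) \<star> c) g = (a \<star> (b \<star> c)) g"
  proof (cases "g \<in> carrier G")
    case True
    have "((a \<star> b) \<star> c) g = (\<Sum>k\<in>carrier G. \<Sum>h\<in>carrier G. a k * (b (inv k \<otimes> h) * c (inv h \<otimes> g)))"
      using True by (simp add: ga_mult_apply sum_distrib_right mult.assoc) (rule sum.swap)
    also have "\<dots> = (\<Sum>k\<in>carrier G. \<Sum>m\<in>carrier G. a k * (b m * c (inv m \<otimes> (inv k \<otimes> g))))"
    proof (rule sum.cong[OF refl])
      fix k assume k: "k \<in> carrier G"
      have cancel: "inv k \<otimes> (k \<otimes> m) = m" "k \<otimes> (inv k \<otimes> m) = m" if "m \<in> carrier G" for m
        using k that by (simp_all add: m_assoc[symmetric])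
      have "inv (inv k \<otimes> h) \<otimes> (inv k \<otimes> g) = inv h \<otimes> g" if "h \<in> carrier G" for h
        using k that True cancel(2) by (simp add: inv_mult_group m_assoc)
      then show "(\<Sum>h\<in>carrier G. a k * (b (inv k \<otimes> h) * c (inv h \<otimes> g))) =
          (\<Sum>m\<in>carrier G. a k * (b m * c (inv m \<otimes> (inv k \<otimes> g))))"
        by (intro sum.reindex_bij_witness[where i = "\<lambda>m. k \<otimes> m" and j = "\<lambda>h. inv k \<otimes> h"])
          (use k cancel in auto)
    qed
    also have "\<dots> = (a \<star> (b \<star> c)) g"
      using True by (simp add: ga_mult_apply sum_distrib_left)
    finally show ?thesis .
  qed (simp add: ga_mult_outside)
qed

lemma ga_mult_unit_left [simp]:
  assumes "a \<in> KG"
  shows "unit \<star> a = a"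
proof
  fix g
  show "(unit \<star> a) g = a g"
  proof (cases "g \<in> carrier G")
    case True
    then have "(unit \<star> a) g = (\<Sum>h\<in>carrier G. if h = \<one> then a (inv h \<otimes> g) else 0)"
      by (auto simp: ga_mult_apply ga_delta_def intro!: sum.cong)
    with True show ?thesis
      by (simp add: finite_carrier)
  qed (use assms in \<open>simp add: ga_mult_outside ga_carrier_def\<close>)
qed

lemma ga_mult_delta_inv_apply:
  assumes "x \<in> carrier G" and "g \<in> carrier G"
  shows "(a \<star> ga_delta (inv g)) x = a (x \<otimes> g)"
proof -
  have "inv h \<otimes> x = inv g \<longleftrightarrow> h = x \<otimes> g" if "h \<in> carrier G" for h
    using assms that by (metis inv_closed inv_inv inv_mult_group inv_solve_left')
  then have "(a \<star> ga_delta (inv g)) x = (\<Sum>h\<in>carrier G. if h = x \<otimes> g then a h else 0)"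
    using assms by (auto simp: ga_mult_apply ga_delta_def intro!: sum.cong)
  with assms show ?thesis
    by (simp add: finite_carrier)
qed

lemma ga_mult_unit_right [simp]:
  assumes "a \<in> KG"
  shows "a \<star> unit = a"
proof
  fix x
  show "(a \<star> unit) x = a x"
    using assms ga_mult_delta_inv_apply[of x \<one>]
    by (cases "x \<in> carrier G") (auto simp: ga_mult_outside ga_carrier_def)
qed

lemma ga_linear_add: "ga_linear G l \<Longrightarrow> a \<in> KG \<Longrightarrow> b \<in> KG \<Longrightarrow> l (a + b) = l a + l b"
  and ga_linear_scale: "ga_linear G l \<Longrightarrow> a \<in> KG \<Longrightarrow> l (\<lambda>x. c * a x) = c * l a"
  by (simp_all add: ga_linear_def plus_fun_def)

lemma ga_linear_zero: "ga_linear G l \<Longrightarrow> l 0 = 0"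
  using ga_linear_scale[of l 0 0] by (simp add: zero_fun_def ga_carrier_def)

lemma ga_linear_sum:
  "ga_linear G l \<Longrightarrow> (\<And>i. i \<in> S \<Longrightarrow> f i \<in> KG) \<Longrightarrow> l (\<Sum>i\<in>S. f i) = (\<Sum>i\<in>S. l (f i))"
  by (induction S rule: infinite_finite_induct)
    (simp_all add: ga_linear_zero ga_linear_add ga_carrier_sum)

lemma ga_carrier_expand: "y \<in> KG \<Longrightarrow> y = (\<Sum>h\<in>carrier G. (\<lambda>x. y h * ga_delta h x))"
  by (auto simp: fun_eq_iff sum_fun_apply ga_delta_def ga_carrier_def finite_carrier if_distrib
      cong: if_cong)

lemma ga_linear_expand:
  assumes "ga_linear G l" and "y \<in> KG"
  shows "l y = (\<Sum>h\<in>carrier G. y h * l (ga_delta h))"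
proof -
  have "l y = (\<Sum>h\<in>carrier G. l (\<lambda>x. y h * ga_delta h x))"
    using assms by (subst ga_carrier_expand) (auto intro: ga_linear_sum)
  also have "\<dots> = (\<Sum>h\<in>carrier G. y h * l (ga_delta h))"
    using assms by (auto intro!: sum.cong ga_linear_scale)
  finally show ?thesis .
qed

lemma ga_linear_cong:
  assumes "ga_linear G l" and "\<forall>x\<in>I. l x = 0" and "y - z \<in> I" and "y \<in> KG" and "z \<in> KG"
  shows "l y = l z"
  using assms ga_linear_add[of l "y - z" z] by auto

lemma ga_right_ideal_iff:
  "ga_right_ideal G I \<longleftrightarrow> I \<subseteq> KG \<and> 0 \<in> I \<and> (\<forall>a\<in>I. \<forall>b\<in>I. a + b \<in> I) \<and> (\<forall>a\<in>I. - a \<in> I) \<and>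
     (\<forall>a\<in>I. \<forall>x\<in>KG. a \<star> x \<in> I)"
  by (simp add: ga_right_ideal_def ga_additive_subgroup_def plus_fun_def fun_Compl_def zero_fun_def)

lemma ga_right_ideal_subset: "ga_right_ideal G I \<Longrightarrow> I \<subseteq> KG"
  and ga_right_ideal_zero: "ga_right_ideal G I \<Longrightarrow> 0 \<in> I"
  and ga_right_ideal_add: "ga_right_ideal G I \<Longrightarrow> a \<in> I \<Longrightarrow> b \<in> I \<Longrightarrow> a + b \<in> I"
  and ga_right_ideal_uminus: "ga_right_ideal G I \<Longrightarrow> a \<in> I \<Longrightarrow> - a \<in> I"
  by (simp_all add: ga_right_ideal_iff)

lemma ga_right_ideal_diff: "ga_right_ideal G I \<Longrightarrow> a \<in> I \<Longrightarrow> b \<in> I \<Longrightarrow> a - b \<in> I"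
  using ga_right_ideal_add[of I a "- b"] ga_right_ideal_uminus[of I b] by simp

lemma ga_right_ideal_mult:
  assumes "ga_right_ideal G I" and "a \<in> I"
  shows "a \<star> x \<in> I"
proof -
  have "a \<star> x = a \<star> (unit \<star> x)"
    using assms ga_right_ideal_subset ga_mult_unit_right[of a] by (metis ga_mult_assoc subsetD)
  then show ?thesis
    using assms by (simp add: ga_right_ideal_iff)
qed

lemma ga_right_ideal_scale:
  assumes "ga_right_ideal G I" and "a \<in> I"
  shows "(\<lambda>x. c * a x) \<in> I"
proof -
  have "a \<in> KG"
    using assms ga_right_ideal_subset by blast
  then show ?thesis
    using ga_right_ideal_mult[OF assms, of "\<lambda>x. c * unit x"] by (simp add: ga_mult_scale_right)
qed

lemma ga_right_ideal_sum: "ga_right_ideal G I \<Longrightarrow> (\<And>i. i \<in> S \<Longrightarrow> f i \<in> I) \<Longrightarrow> (\<Sum>i\<in>S. f i) \<in> I"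
  by (induction S rule: infinite_finite_induct)
    (simp_all add: ga_right_ideal_zero ga_right_ideal_add)

lemma ga_right_ideal_carrier: "ga_right_ideal G KG"
  by (auto simp: ga_right_ideal_iff)

lemma ga_right_ideal_Int: "ga_right_ideal G I \<Longrightarrow> ga_right_ideal G I' \<Longrightarrow> ga_right_ideal G (I \<inter> I')"
  by (simp add: ga_right_ideal_iff) blast

lemma ga_right_ideal_Inter:
  "(\<And>I. I \<in> S \<Longrightarrow> ga_right_ideal G I) \<Longrightarrow> ga_right_ideal G (KG \<inter> \<Inter>S)"
  by (simp add: ga_right_ideal_iff) blast

lemma ga_right_ideal_set_plus:
  assumes I: "ga_right_ideal G I" and I': "ga_right_ideal G I'"
  shows "ga_right_ideal G (I + I')"
  unfolding ga_right_ideal_iff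
proof (intro conjI ballI)
  show "I + I' \<subseteq> KG"
    using ga_right_ideal_subset[OF I] ga_right_ideal_subset[OF I'] by (auto elim!: set_plus_elim)
  show "0 \<in> I + I'"
    using set_plus_intro[OF ga_right_ideal_zero[OF I] ga_right_ideal_zero[OF I']] by simp
  fix a assume "a \<in> I + I'"
  then obtain a1 a2 where a: "a = a1 + a2" "a1 \<in> I" "a2 \<in> I'"
    by (auto elim: set_plus_elim)
  show "- a \<in> I + I'"
    using a set_plus_intro[OF ga_right_ideal_uminus[OF I] ga_right_ideal_uminus[OF I']] by simp
  show "a \<star> x \<in> I + I'" for x
    using a set_plus_intro[OF ga_right_ideal_mult[OF I] ga_right_ideal_mult[OF I']]
    by (simp add: ga_mult_add_left)
  fix b assume "b \<in> I + I'"
  then obtain b1 b2 where b: "b = b1 + b2" "b1 \<in> I" "b2 \<in> I'"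
    by (auto elim: set_plus_elim)
  have "a + b = (a1 + b1) + (a2 + b2)"
    using a b by (simp add: algebra_simps)
  then show "a + b \<in> I + I'"
    using a b by (metis set_plus_intro ga_right_ideal_add[OF I] ga_right_ideal_add[OF I'])
qed

lemma ga_right_ideal_principal: "ga_right_ideal G ((\<star>) y ` KG)"
  unfolding ga_right_ideal_iff
proof (intro conjI ballI)
  show "0 \<in> (\<star>) y ` KG"
    using image_eqI[of 0 "(\<star>) y" 0] by simp
  fix a assume "a \<in> (\<star>) y ` KG"
  then obtain a' where a: "a = y \<star> a'" "a' \<in> KG"
    by blast
  show "- a \<in> (\<star>) y ` KG"
    using a image_eqI[of "- a" "(\<star>) y" "- a'"] by (auto simp: ga_mult_minus_right)
  show "a \<star> x \<in> (\<star>) y ` KG" for x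
    using a by auto
  fix b assume "b \<in> (\<star>) y ` KG"
  then obtain b' where b: "b = y \<star> b'" "b' \<in> KG"
    by blast
  show "a + b \<in> (\<star>) y ` KG"
    using a b image_eqI[of "a + b" "(\<star>) y" "a' + b'"] by (auto simp: ga_mult_add_right)
qed auto

lemma ga_principal_self: "y \<in> KG \<Longrightarrow> y \<in> (\<star>) y ` KG"
  using ga_mult_unit_right[of y] by (metis ga_carrier_delta image_eqI one_closed)

end

section \<open>Checkability from a Frobenius form\<close>

definition ga_functional_vector ::
    "('g, 'b) monoid_scheme \<Rightarrow> (('g \<Rightarrow> 'k::field) \<Rightarrow> 'k) \<Rightarrow> 'g \<Rightarrow> 'k" where
  "ga_functional_vector G l = (\<lambda>g. if g \<in> carrier G then l (ga_delta (inv\<^bsub>G\<^esub> g)) else 0)"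

(* Only the right-ideal half of frobenius_quotient: this is all that checkability needs, and all
   that the construction for the radical provides. *)
definition right_frobenius_form ::
    "('g, 'b) monoid_scheme \<Rightarrow> ('g \<Rightarrow> 'k::field) set \<Rightarrow> (('g \<Rightarrow> 'k) \<Rightarrow> 'k) \<Rightarrow> bool" where
  "right_frobenius_form G C l \<longleftrightarrow> ga_linear G l \<and> (\<forall>c\<in>C. l c = 0) \<and>
     (\<forall>L. ga_right_ideal G L \<and> C \<subseteq> L \<and> (\<forall>a\<in>L. l a = 0) \<longrightarrow> L = C)"

lemma right_frobenius_form_if_frobenius_quotient:
  "frobenius_quotient G C \<Longrightarrow> \<exists>l. right_frobenius_form G C l"
  unfolding frobenius_quotient_def right_frobenius_form_def by blast

context group_algebra
begin

lemma ga_mult_functional_vector_apply: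
  assumes l: "ga_linear G l" and a: "a \<in> KG" and g: "g \<in> carrier G"
  shows "(ga_functional_vector G l \<star> a) g = l (a \<star> ga_delta (inv g))"
proof -
  have "(ga_functional_vector G l \<star> a) g = (\<Sum>h\<in>carrier G. l (ga_delta (inv h)) * a (inv h \<otimes> g))"
    unfolding ga_mult_apply[OF g] by (rule sum.cong) (auto simp: ga_functional_vector_def)
  also have "\<dots> = (\<Sum>k\<in>carrier G. l (ga_delta k) * a (k \<otimes> g))"
    by (rule sum.reindex_bij_witness[where i = "\<lambda>k. inv k" and j = "\<lambda>k. inv k"]) auto
  also have "\<dots> = (\<Sum>k\<in>carrier G. (a \<star> ga_delta (inv g)) k * l (ga_delta k))"
    by (rule sum.cong) (auto simp: ga_mult_delta_inv_apply g)
  also have "\<dots> = l (a \<star> ga_delta (inv g))"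
    using ga_linear_expand[OF l, of "a \<star> ga_delta (inv g)"] by simp
  finally show ?thesis .
qed

lemma checkable_if_right_frobenius_form:
  assumes C: "ga_right_ideal G C" and "right_frobenius_form G C l"
  shows "checkable G C"
proof -
  have l: "ga_linear G l" and l_C: "\<forall>c\<in>C. l c = 0"
    and nondegenerate: "\<And>L. ga_right_ideal G L \<Longrightarrow> C \<subseteq> L \<Longrightarrow> \<forall>a\<in>L. l a = 0 \<Longrightarrow> L = C"
    using assms(2) by (auto simp: right_frobenius_form_def)
  define v where "v = ga_functional_vector G l"
  define L where "L = {a \<in> KG. v \<star> a = 0}"
  have "ga_right_ideal G L"
    by (auto simp: L_def ga_right_ideal_iff ga_mult_add_right ga_mult_minus_right
        simp flip: ga_mult_assoc)
  moreover have "C \<subseteq> L"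
  proof
    fix a assume "a \<in> C"
    then have a: "a \<in> KG" "\<And>x. a \<star> x \<in> C"
      using C ga_right_ideal_subset ga_right_ideal_mult by blast+
    have "(v \<star> a) g = 0" for g
      using a l_C ga_mult_functional_vector_apply[OF l a(1), of g]
      by (cases "g \<in> carrier G") (simp_all add: v_def ga_mult_outside)
    then show "a \<in> L"
      using a by (auto simp: L_def)
  qed
  moreover have "l a = 0" if "a \<in> L" for a
  proof -
    have a: "a \<in> KG" "v \<star> a = 0"
      using that by (auto simp: L_def)
    then show "l a = 0"
      using ga_mult_functional_vector_apply[OF l a(1) one_closed] by (simp add: v_def)
  qed
  ultimately have "L = C"
    using nondegenerate by blast
  moreover have "v \<in> KG"
    by (simp add: v_def ga_functional_vector_def ga_carrier_def)
  ultimately show ?thesis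
    by (auto simp: checkable_def L_def zero_fun_def)
qed

section \<open>The Jacobson radical\<close>

abbreviation rad :: "('a \<Rightarrow> 'k::field) set" where
  "rad \<equiv> ga_jacobson G"

lemma rad_iff: "x \<in> rad \<longleftrightarrow> x \<in> KG \<and> (\<forall>M. ga_maximal_right_ideal G M \<longrightarrow> x \<in> M)"
  by (auto simp: ga_jacobson_def)

lemma rad_subset_maximal: "ga_maximal_right_ideal G M \<Longrightarrow> rad \<subseteq> M"
  by (auto simp: rad_iff)

lemma ga_right_ideal_rad: "ga_right_ideal G rad"
  unfolding ga_jacobson_def
  by (rule ga_right_ideal_Inter) (simp add: ga_maximal_right_ideal_def)

lemmas rad_subset = ga_right_ideal_subset[OF ga_right_ideal_rad]
  and rad_zero = ga_right_ideal_zero[OF ga_right_ideal_rad]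
  and rad_add = ga_right_ideal_add[OF ga_right_ideal_rad]
  and rad_uminus = ga_right_ideal_uminus[OF ga_right_ideal_rad]
  and rad_diff = ga_right_ideal_diff[OF ga_right_ideal_rad]
  and rad_mult_right = ga_right_ideal_mult[OF ga_right_ideal_rad]
  and rad_sum = ga_right_ideal_sum[OF ga_right_ideal_rad]

lemma maximal_right_ideal_set_plus_eq:
  assumes M: "ga_maximal_right_ideal G M" and I: "ga_right_ideal G I" and "\<not> I \<subseteq> M"
  shows "M + I = KG"
proof -
  have M_ideal: "ga_right_ideal G M"
    using M by (simp add: ga_maximal_right_ideal_def)
  have "M \<subseteq> M + I" and "I \<subseteq> M + I"
    using ga_right_ideal_zero[OF I] ga_right_ideal_zero[OF M_ideal]
    by (simp_all add: set_plus_subset_left set_plus_subset_right)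
  then show ?thesis
    using M ga_right_ideal_set_plus[OF M_ideal I] \<open>\<not> I \<subseteq> M\<close>
    unfolding ga_maximal_right_ideal_def by blast
qed

lemma ga_right_ideal_preimage:
  assumes M: "ga_right_ideal G M"
  shows "ga_right_ideal G {b \<in> KG. y \<star> b \<in> M}" (is "ga_right_ideal G ?My")
  unfolding ga_right_ideal_iff
proof (intro conjI ballI)
  show "0 \<in> ?My"
    using ga_right_ideal_zero[OF M] by simp
  fix a assume a: "a \<in> ?My"
  show "- a \<in> ?My"
    using a ga_right_ideal_uminus[OF M] by (auto simp: ga_mult_minus_right)
  show "a \<star> x \<in> ?My" for x
    using a ga_right_ideal_mult[OF M, of "y \<star> a" x] by simp
  fix b assume "b \<in> ?My"
  then show "a + b \<in> ?My"
    using a ga_right_ideal_add[OF M] by (auto simp: ga_mult_add_right)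
qed blast

lemma maximal_right_ideal_preimage:
  fixes y :: "'a \<Rightarrow> 'k::field"
  assumes M: "ga_maximal_right_ideal G M" and proper: "{b \<in> KG. y \<star> b \<in> M} \<noteq> KG"
  shows "ga_maximal_right_ideal G {b \<in> KG. y \<star> b \<in> M}" (is "ga_maximal_right_ideal G ?My")
proof -
  have M_ideal: "ga_right_ideal G M"
    using M by (simp add: ga_maximal_right_ideal_def)
  have My_ideal: "ga_right_ideal G ?My"
    by (rule ga_right_ideal_preimage[OF M_ideal])
  have "KG \<subseteq> N" if N: "ga_right_ideal G N" "?My \<subseteq> N" and n: "n \<in> N" "n \<notin> ?My"
    for N :: "('a \<Rightarrow> 'k) set" and n
  proof
    fix b :: "'a \<Rightarrow> 'k" assume b: "b \<in> KG"
    have "n \<in> KG"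
      using N(1) n(1) ga_right_ideal_subset by blast
    then have "y \<star> n \<notin> M"
      using n(2) by simp
    then have "\<not> (\<star>) (y \<star> n) ` KG \<subseteq> M"
      using ga_principal_self[OF ga_mult_closed] by blast
    then have "M + (\<star>) (y \<star> n) ` KG = KG"
      by (rule maximal_right_ideal_set_plus_eq[OF M ga_right_ideal_principal])
    then have "y \<star> b \<in> M + (\<star>) (y \<star> n) ` KG"
      by (simp only: ga_mult_closed)
    then obtain m c where "y \<star> b = m + (y \<star> n) \<star> c" "m \<in> M" "c \<in> KG"
      by (auto elim!: set_plus_elim)
    then have "y \<star> (b - n \<star> c) \<in> M"
      by (simp add: ga_mult_diff_right)
    then have "b - n \<star> c \<in> N"
      using b N(2) ga_carrier_diff[OF b ga_mult_closed] by blast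
    from ga_right_ideal_add[OF N(1) this ga_right_ideal_mult[OF N(1) n(1), of c]]
    show "b \<in> N"
      by simp
  qed
  then have "N = ?My \<or> N = KG" if "ga_right_ideal G N" "?My \<subseteq> N" for N
    using that ga_right_ideal_subset[OF that(1)] by blast
  with My_ideal proper show ?thesis
    unfolding ga_maximal_right_ideal_def by blast
qed

lemma rad_mult_left:
  assumes "a \<in> rad"
  shows "y \<star> a \<in> rad"
proof -
  have "y \<star> a \<in> M" if M: "ga_maximal_right_ideal G M" for M
  proof (cases "{b \<in> KG. y \<star> b \<in> M} = KG")
    case True
    then show ?thesis
      using assms rad_subset by blast
  next
    case False
    then show ?thesis
      using assms rad_subset_maximal[OF maximal_right_ideal_preimage[OF M False]] by blast
  qed
  then show ?thesis
    by (simp add: rad_iff)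
qed

section \<open>Minimal right ideals and complements modulo the radical\<close>

lemma finite_ga_carrier: "finite (KG :: ('a \<Rightarrow> 'k::{field,finite}) set)"
proof -
  have "KG = {f :: 'a \<Rightarrow> 'k. \<forall>x. (x \<in> carrier G \<longrightarrow> f x \<in> UNIV) \<and> (x \<notin> carrier G \<longrightarrow> f x = 0)}"
    by (auto simp: ga_carrier_def)
  then show ?thesis
    using finite_set_of_finite_funs[OF finite_carrier finite_UNIV] by simp
qed

lemma finite_right_ideals: "finite {I :: ('a \<Rightarrow> 'k::{field,finite}) set. ga_right_ideal G I \<and> P I}"
  using finite_ga_carrier by (rule finite_subset[rotated, OF finite_Pow_iff[THEN iffD2]])
    (auto dest: ga_right_ideal_subset)

definition minimal_right_ideal_mod_rad :: "('a \<Rightarrow> 'k::field) set \<Rightarrow> bool" where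
  "minimal_right_ideal_mod_rad L \<longleftrightarrow> ga_right_ideal G L \<and> rad \<subseteq> L \<and> \<not> L \<subseteq> rad \<and>
     (\<forall>L'. ga_right_ideal G L' \<and> rad \<subseteq> L' \<and> \<not> L' \<subseteq> rad \<and> L' \<subseteq> L \<longrightarrow> L' = L)"

lemma minimal_right_ideal_mod_rad_exists:
  fixes N :: "('a \<Rightarrow> 'k::{field,finite}) set"
  assumes "ga_right_ideal G N" and "rad \<subseteq> N" and "\<not> N \<subseteq> rad"
  obtains L where "minimal_right_ideal_mod_rad L" and "L \<subseteq> N"
proof -
  let ?F = "{L :: ('a \<Rightarrow> 'k) set. ga_right_ideal G L \<and> rad \<subseteq> L \<and> \<not> L \<subseteq> rad}"
  have "N \<in> ?F"
    using assms by simp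
  from finite_has_minimal2[OF finite_right_ideals[of "\<lambda>L. rad \<subseteq> L \<and> \<not> L \<subseteq> rad"] this]
  obtain L where L: "L \<in> ?F" "L \<subseteq> N" and L_min: "\<forall>L'\<in>?F. L' \<subseteq> L \<longrightarrow> L = L'"
    by (elim bexE conjE) simp
  have "minimal_right_ideal_mod_rad L"
    using L L_min by (auto simp: minimal_right_ideal_mod_rad_def)
  then show thesis
    using L(2) by (rule that)
qed

lemma set_plus_Int_maximal_eq:
  fixes L :: "('a \<Rightarrow> 'k::field) set"
  assumes L: "ga_right_ideal G L" and N: "ga_right_ideal G N" and "L + N = KG"
    and M: "ga_maximal_right_ideal G M" and "\<not> L \<inter> N \<subseteq> M"
  shows "L + (N \<inter> M) = KG"
proof
  have "ga_right_ideal G M"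
    using M by (simp add: ga_maximal_right_ideal_def)
  then show "L + (N \<inter> M) \<subseteq> KG"
    by (intro ga_right_ideal_subset ga_right_ideal_set_plus L ga_right_ideal_Int N)
  have LN_M: "M + (L \<inter> N) = KG"
    using maximal_right_ideal_set_plus_eq[OF M ga_right_ideal_Int[OF L N]] assms(5) .
  show "KG \<subseteq> L + (N \<inter> M)"
  proof
    fix a :: "'a \<Rightarrow> 'k" assume "a \<in> KG"
    then have "a \<in> L + N"
      using \<open>L + N = KG\<close> by simp
    then obtain l n where a: "a = l + n" "l \<in> L" "n \<in> N"
      by (auto elim: set_plus_elim)
    then have "n \<in> M + (L \<inter> N)"
      using subsetD[OF ga_right_ideal_subset[OF N]] LN_M by simp
    then obtain m w where n: "n = m + w" "m \<in> M" "w \<in> L \<inter> N"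
      by (auto elim: set_plus_elim)
    then have "m \<in> N \<inter> M"
      using ga_right_ideal_diff[OF N \<open>n \<in> N\<close>, of w] by simp
    moreover have "l + w \<in> L"
      using ga_right_ideal_add[OF L a(2)] n(3) by simp
    moreover have "a = (l + w) + m"
      using a n by (simp add: algebra_simps)
    ultimately show "a \<in> L + (N \<inter> M)"
      by (simp add: set_plus_intro)
  qed
qed

lemma rad_complement_shrink:
  fixes L :: "('a \<Rightarrow> 'k::field) set"
  assumes L: "ga_right_ideal G L" and N: "ga_right_ideal G N" "rad \<subseteq> N" "L + N = KG"
    and x: "x \<in> L" "x \<in> N" "x \<notin> rad"
  obtains N' where "ga_right_ideal G N'" "rad \<subseteq> N'" "L + N' = KG" "N' \<subset> N"
proof -
  have "x \<in> KG"
    using subsetD[OF ga_right_ideal_subset[OF L] x(1)] .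
  with x(3) have "\<exists>M. ga_maximal_right_ideal G M \<and> x \<notin> M"
    by (simp add: rad_iff)
  then obtain M where M: "ga_maximal_right_ideal G M" "x \<notin> M"
    by blast
  then have "\<not> L \<inter> N \<subseteq> M"
    using x by blast
  then have sum_eq: "L + (N \<inter> M) = KG"
    by (rule set_plus_Int_maximal_eq[OF L N(1) N(3) M(1)])
  have "ga_right_ideal G (N \<inter> M)"
    using M(1) by (intro ga_right_ideal_Int N(1)) (simp add: ga_maximal_right_ideal_def)
  moreover have "rad \<subseteq> N \<inter> M"
    by (simp add: N(2) rad_subset_maximal[OF M(1)])
  moreover note sum_eq
  moreover have "N \<inter> M \<subset> N"
    using x(2) M(2) by blast
  ultimately show thesis
    by (rule that)
qed

lemma rad_complement_exists:
  fixes L :: "('a \<Rightarrow> 'k::{field,finite}) set"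
  assumes L: "ga_right_ideal G L" "rad \<subseteq> L"
  obtains N where "ga_right_ideal G N" "rad \<subseteq> N" "L + N = KG" "L \<inter> N \<subseteq> rad"
proof -
  let ?F = "{N :: ('a \<Rightarrow> 'k) set. ga_right_ideal G N \<and> rad \<subseteq> N \<and> L + N = KG}"
  have "L + KG = KG"
    using ga_right_ideal_subset[OF ga_right_ideal_set_plus[OF L(1) ga_right_ideal_carrier]]
      set_plus_subset_right[OF ga_right_ideal_zero[OF L(1)]] by (rule subset_antisym)
  then have "KG \<in> ?F"
    using ga_right_ideal_carrier rad_subset by simp
  from finite_has_minimal2[OF finite_right_ideals[of "\<lambda>N. rad \<subseteq> N \<and> L + N = KG"] this]
  obtain N where N_F: "N \<in> ?F" and N_min: "\<forall>N'\<in>?F. N' \<subseteq> N \<longrightarrow> N = N'"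
    by (elim bexE conjE) simp
  from N_F have N: "ga_right_ideal G N" "rad \<subseteq> N" "L + N = KG"
    by simp_all
  have "x \<in> rad" if x: "x \<in> L" "x \<in> N" for x
  proof (rule ccontr)
    assume "x \<notin> rad"
    then obtain N' where N': "ga_right_ideal G N'" "rad \<subseteq> N'" "L + N' = KG" "N' \<subset> N"
      by (rule rad_complement_shrink[OF L(1) N x])
    then have "N' \<in> ?F"
      by simp
    with N_min N'(4) show False
      by blast
  qed
  then have "L \<inter> N \<subseteq> rad"
    by blast
  with N show thesis
    by (rule that)
qed

section \<open>Primitive idempotents modulo the radical\<close>

(* e is an idempotent of KG/rad and e (KG/rad) is a minimal right ideal: every nonzero e y
   generates e again. *)
definition primitive_mod_rad :: "('a \<Rightarrow> 'k::field) \<Rightarrow> bool" where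
  "primitive_mod_rad e \<longleftrightarrow> e \<star> e - e \<in> rad \<and>
     (\<forall>y\<in>KG. e \<star> y \<notin> rad \<longrightarrow> (\<exists>b\<in>KG. e \<star> (y \<star> b) - e \<in> rad))"

definition primitive_decomposition :: "('a \<Rightarrow> 'k::field) set \<Rightarrow> ('a \<Rightarrow> 'k) \<Rightarrow> bool" where
  "primitive_decomposition E f \<longleftrightarrow> finite E \<and> (\<Sum>E) - f \<in> rad \<and>
     (\<forall>e\<in>E. \<forall>e'\<in>E. e \<noteq> e' \<longrightarrow> e \<star> e' \<in> rad) \<and> (\<forall>e\<in>E. primitive_mod_rad e)"

lemma left_identity_mod_rad_split:
  fixes e e' :: "'a \<Rightarrow> 'k::field"
  assumes L: "ga_right_ideal G L" "rad \<subseteq> L" and L': "ga_right_ideal G L'" and LL': "L \<inter> L' \<subseteq> rad"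
    and e: "e \<in> L" "e' \<in> L'" and x: "x \<in> L" "(e + e') \<star> x - x \<in> rad"
  shows "e \<star> x - x \<in> rad" and "e' \<star> x \<in> rad"
proof -
  have "e' \<star> x = ((e + e') \<star> x - x) + (x - e \<star> x)"
    by (simp add: ga_mult_add_left)
  also have "\<dots> \<in> L"
    using ga_right_ideal_add[OF L(1) subsetD[OF L(2) x(2)]
        ga_right_ideal_diff[OF L(1) x(1) ga_right_ideal_mult[OF L(1) e(1)]]] .
  finally have "e' \<star> x \<in> L" .
  moreover have "e' \<star> x \<in> L'"
    using ga_right_ideal_mult[OF L' e(2)] .
  ultimately show e'x: "e' \<star> x \<in> rad"
    using LL' by blast
  have "e \<star> x - x = ((e + e') \<star> x - x) - e' \<star> x"
    by (simp add: ga_mult_add_left)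
  also have "\<dots> \<in> rad"
    by (rule rad_diff[OF x(2) e'x])
  finally show "e \<star> x - x \<in> rad" .
qed

lemma left_identity_mod_rad_notin_rad:
  assumes "\<not> L \<subseteq> rad" and "\<forall>x\<in>L. e \<star> x - x \<in> rad"
  shows "e \<notin> rad"
proof
  assume "e \<in> rad"
  then have "e \<star> x - (e \<star> x - x) \<in> rad" if "x \<in> L" for x
    using rad_diff[OF rad_mult_right] assms(2) that by blast
  then have "L \<subseteq> rad"
    by auto
  with assms(1) show False
    by blast
qed

lemma minimal_right_ideal_mod_rad_generated:
  assumes L: "minimal_right_ideal_mod_rad L" and z: "z \<in> L" "z \<notin> rad"
  shows "rad + (\<star>) z ` KG = L" (is "?S = L")
proof -
  have L_ideal: "ga_right_ideal G L" and rad_L: "rad \<subseteq> L"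
    and L_min: "\<And>L'. ga_right_ideal G L' \<Longrightarrow> rad \<subseteq> L' \<Longrightarrow> \<not> L' \<subseteq> rad \<Longrightarrow> L' \<subseteq> L \<Longrightarrow> L' = L"
    using L by (auto simp: minimal_right_ideal_mod_rad_def)
  have S_ideal: "ga_right_ideal G ?S"
    by (rule ga_right_ideal_set_plus[OF ga_right_ideal_rad ga_right_ideal_principal])
  have rad_S: "rad \<subseteq> ?S"
    by (rule set_plus_subset_left[OF ga_right_ideal_zero[OF ga_right_ideal_principal]])
  have "z \<in> ?S"
    using set_plus_subset_right[OF rad_zero] ga_principal_self z(1) L_ideal ga_right_ideal_subset
    by blast
  then have "\<not> ?S \<subseteq> rad"
    using z(2) by blast
  moreover have "?S \<subseteq> L"
  proof
    fix s assume "s \<in> ?S"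
    then obtain j c where "s = j + z \<star> c" "j \<in> rad"
      by (auto elim!: set_plus_elim)
    then show "s \<in> L"
      using rad_L ga_right_ideal_add[OF L_ideal _ ga_right_ideal_mult[OF L_ideal z(1)]] by blast
  qed
  ultimately show ?thesis
    using L_min[OF S_ideal rad_S] by simp
qed

lemma primitive_mod_rad_if_minimal:
  fixes e :: "'a \<Rightarrow> 'k::field"
  assumes L: "minimal_right_ideal_mod_rad L" and e: "e \<in> L" and left_id: "\<forall>x\<in>L. e \<star> x - x \<in> rad"
  shows "primitive_mod_rad e"
proof -
  have L_ideal: "ga_right_ideal G L"
    using L by (simp add: minimal_right_ideal_mod_rad_def)
  have "\<exists>b\<in>KG. e \<star> (y \<star> b) - e \<in> rad" if "e \<star> y \<notin> rad" for y
  proof -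
    have "e \<in> rad + (\<star>) (e \<star> y) ` KG"
      using minimal_right_ideal_mod_rad_generated[OF L ga_right_ideal_mult[OF L_ideal e] that] e
      by simp
    then obtain j w where "e = j + w" "j \<in> rad" "w \<in> (\<star>) (e \<star> y) ` KG"
      by (rule set_plus_elim)
    moreover from \<open>e = j + w\<close> have "w - e = - j"
      by (simp add: algebra_simps)
    ultimately obtain c where "c \<in> KG" "e \<star> (y \<star> c) - e = - j"
      by auto
    then show ?thesis
      using rad_uminus[OF \<open>j \<in> rad\<close>] by metis
  qed
  moreover have "e \<star> e - e \<in> rad"
    using left_id e by blast
  ultimately show ?thesis
    by (simp add: primitive_mod_rad_def)
qed

lemma primitive_decomposition_left_identity:
  assumes E: "primitive_decomposition E f" and e: "e \<in> E"
  shows "e \<star> f - e \<in> rad"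
proof -
  have fin: "finite E" and sum_f: "(\<Sum>E) - f \<in> rad" and idem: "e \<star> e - e \<in> rad"
    and orth: "\<And>e'. e' \<in> E - {e} \<Longrightarrow> e \<star> e' \<in> rad"
    using E e by (auto simp: primitive_decomposition_def primitive_mod_rad_def)
  have "e \<star> (\<Sum>E) = e \<star> e + (\<Sum>e'\<in>E - {e}. e \<star> e')"
    using sum.remove[OF fin e, of "(\<star>) e"] by (simp add: ga_mult_sum_right)
  then have "e \<star> f - e = - (e \<star> ((\<Sum>E) - f)) + (e \<star> e - e) + (\<Sum>e'\<in>E - {e}. e \<star> e')"
    by (simp add: ga_mult_diff_right algebra_simps)
  also have "\<dots> \<in> rad"
    by (intro rad_add rad_uminus rad_sum rad_mult_left[OF sum_f] idem orth)
  finally show ?thesis .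
qed

lemma primitive_decomposition_mult_annihilated:
  assumes "primitive_decomposition E f" and "e \<in> E" and "f \<star> x \<in> rad"
  shows "e \<star> x \<in> rad"
proof -
  have "e \<star> x = e \<star> (f \<star> x) - (e \<star> f - e) \<star> x"
    by (simp add: ga_mult_diff_left)
  also have "\<dots> \<in> rad"
    using rad_mult_left[OF assms(3)]
      rad_mult_right[OF primitive_decomposition_left_identity[OF assms(1,2)]]
    by (rule rad_diff)
  finally show ?thesis .
qed

lemma primitive_decomposition_insert:
  assumes "primitive_decomposition E f" and "primitive_mod_rad e" and "e \<notin> E"
    and "\<forall>e'\<in>E. e \<star> e' \<in> rad \<and> e' \<star> e \<in> rad"
  shows "primitive_decomposition (insert e E) (e + f)"
  using assms by (auto simp: primitive_decomposition_def algebra_simps)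

lemma left_identity_mod_rad_decompose:
  fixes e f' :: "'a \<Rightarrow> 'k::field"
  assumes L: "minimal_right_ideal_mod_rad L" "L \<subseteq> N"
    and L': "ga_right_ideal G L'" "rad \<subseteq> L'" "L \<inter> L' \<subseteq> rad"
    and e: "e \<in> L" "f' \<in> L'" and left_id: "\<forall>x\<in>N. (e + f') \<star> x - x \<in> rad"
  shows "primitive_mod_rad e" "e \<notin> L'" "f' \<star> e \<in> rad"
    "\<forall>x\<in>N \<inter> L'. e \<star> x \<in> rad \<and> f' \<star> x - x \<in> rad"
proof -
  have L_ideal: "ga_right_ideal G L" and rad_L: "rad \<subseteq> L" and "\<not> L \<subseteq> rad"
    using L(1) by (simp_all add: minimal_right_ideal_mod_rad_def)
  have on_L: "e \<star> x - x \<in> rad" "f' \<star> x \<in> rad" if "x \<in> L" for x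
    using left_identity_mod_rad_split[OF L_ideal rad_L L'(1,3) e that] left_id L(2) that by blast+
  then show "primitive_mod_rad e" "f' \<star> e \<in> rad"
    using primitive_mod_rad_if_minimal[OF L(1) e(1)] e(1) by blast+
  have "e \<notin> rad"
    using left_identity_mod_rad_notin_rad[OF \<open>\<not> L \<subseteq> rad\<close>] on_L(1) by blast
  then show "e \<notin> L'"
    using e(1) L'(3) by blast
  have "e \<star> x \<in> rad \<and> f' \<star> x - x \<in> rad" if "x \<in> N" "x \<in> L'" for x
  proof -
    have "L' \<inter> L \<subseteq> rad" "(f' + e) \<star> x - x \<in> rad"
      using L'(3) left_id that(1) by (auto simp: add.commute)
    from left_identity_mod_rad_split[OF L'(1,2) L_ideal this(1) e(2,1) that(2) this(2)]
    show ?thesis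
      by blast
  qed
  then show "\<forall>x\<in>N \<inter> L'. e \<star> x \<in> rad \<and> f' \<star> x - x \<in> rad"
    by blast
qed

lemma split_off_primitive:
  fixes N :: "('a \<Rightarrow> 'k::{field,finite}) set"
  assumes N: "ga_right_ideal G N" "rad \<subseteq> N" "\<not> N \<subseteq> rad"
    and f: "f \<in> N" "\<forall>x\<in>N. f \<star> x - x \<in> rad"
  obtains e f' N' where "ga_right_ideal G N'" "rad \<subseteq> N'" "N' \<subset> N" "e \<in> N - N'" "f' \<in> N'"
    "f = e + f'" "primitive_mod_rad e" "f' \<star> e \<in> rad" "\<forall>x\<in>N'. e \<star> x \<in> rad \<and> f' \<star> x - x \<in> rad"
proof -
  obtain L where L: "minimal_right_ideal_mod_rad L" "L \<subseteq> N"
    using minimal_right_ideal_mod_rad_exists[OF N] .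
  then have L_ideal: "ga_right_ideal G L" and rad_L: "rad \<subseteq> L"
    by (simp_all add: minimal_right_ideal_mod_rad_def)
  obtain L' where L': "ga_right_ideal G L'" "rad \<subseteq> L'" "L + L' = KG" "L \<inter> L' \<subseteq> rad"
    using rad_complement_exists[OF L_ideal rad_L] .
  have "f \<in> L + L'"
    using L'(3) subsetD[OF ga_right_ideal_subset[OF N(1)] f(1)] by simp
  then obtain e f' where e: "f = e + f'" "e \<in> L" "f' \<in> L'"
    by (rule set_plus_elim)
  note decomposed = left_identity_mod_rad_decompose[OF L L'(1,2,4) e(2,3) f(2)[unfolded e(1)]]
  have "e \<in> N"
    using e(2) L(2) by blast
  moreover have "f' \<in> N \<inter> L'"
    using ga_right_ideal_diff[OF N(1) f(1) \<open>e \<in> N\<close>] e(1,3) by simp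
  moreover have "ga_right_ideal G (N \<inter> L')" "rad \<subseteq> N \<inter> L'"
    using ga_right_ideal_Int[OF N(1) L'(1)] N(2) L'(2) by simp_all
  ultimately show thesis
    using that[of "N \<inter> L'" e f'] decomposed e(1) by blast
qed

lemma primitive_decomposition_exists:
  fixes N :: "('a \<Rightarrow> 'k::{field,finite}) set"
  assumes "ga_right_ideal G N" and "rad \<subseteq> N" and "f \<in> N" and "\<forall>x\<in>N. f \<star> x - x \<in> rad"
  shows "\<exists>E \<subseteq> N. primitive_decomposition E f"
  using assms
proof (induction "card N" arbitrary: N f rule: less_induct)
  case less
  show ?case
  proof (cases "N \<subseteq> rad")
    case True
    then have "primitive_decomposition {} f"
      using rad_uminus less.prems(3) by (auto simp: primitive_decomposition_def)
    then show ?thesis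
      by blast
  next
    case False
    obtain e f' N' where N': "ga_right_ideal G N'" "rad \<subseteq> N'" "N' \<subset> N" "e \<in> N - N'" "f' \<in> N'"
      and e: "f = e + f'" "primitive_mod_rad e" "f' \<star> e \<in> rad"
      and on_N': "\<forall>x\<in>N'. e \<star> x \<in> rad \<and> f' \<star> x - x \<in> rad"
      using split_off_primitive[OF less.prems(1,2) False less.prems(3,4)] .
    have "finite N"
      using finite_subset[OF ga_right_ideal_subset[OF less.prems(1)] finite_ga_carrier] .
    then have "card N' < card N"
      using psubset_card_mono N'(3) by blast
    moreover have "\<forall>x\<in>N'. f' \<star> x - x \<in> rad"
      using on_N' by blast
    ultimately obtain E' where E': "E' \<subseteq> N'" "primitive_decomposition E' f'"
      using less.hyps[OF _ N'(1,2,5)] by blast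
    have "e' \<star> e \<in> rad" if "e' \<in> E'" for e'
      using primitive_decomposition_mult_annihilated[OF E'(2) that e(3)] .
    moreover have "e \<notin> E'" "\<forall>e'\<in>E'. e \<star> e' \<in> rad"
      using N'(4) E'(1) on_N' by blast+
    ultimately have "primitive_decomposition (insert e E') f"
      unfolding e(1) by (intro primitive_decomposition_insert[OF E'(2) e(2)]) blast+
    moreover have "insert e E' \<subseteq> N"
      using N'(3,4) E'(1) by blast
    ultimately show ?thesis
      by blast
  qed
qed

section \<open>A Frobenius form for the radical\<close>

lemma rad_separating_functional:
  fixes e :: "'a \<Rightarrow> 'k::field"
  assumes "e \<notin> rad"
  shows "\<exists>l. ga_linear G l \<and> (\<forall>x\<in>rad. l x = 0) \<and> l e = 1"
proof -
  interpret V: vector_space "\<lambda>c (f :: 'a \<Rightarrow> 'k) x. c * f x"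
    by (rule vector_space_fun_scale)
  have "V.subspace rad"
    unfolding V.subspace_def
    by (auto intro: rad_zero rad_add ga_right_ideal_scale[OF ga_right_ideal_rad])
  then obtain l where l: "Vector_Spaces.linear (\<lambda>c f x. c * f x) (*) l" "\<forall>x\<in>rad. l x = 0" "l e = 1"
    using V.subspace_separating_functional assms by blast
  interpret l: Vector_Spaces.linear "\<lambda>c (f :: 'a \<Rightarrow> 'k) x. c * f x" "(*)" l
    by (rule l(1))
  have "ga_linear G l"
    by (simp add: ga_linear_def l.add[unfolded plus_fun_def] l.scale)
  with l(2,3) show ?thesis
    by blast
qed

lemma rad_separating_functionals:
  obtains \<phi> :: "('a \<Rightarrow> 'k::field) \<Rightarrow> ('a \<Rightarrow> 'k) \<Rightarrow> 'k"
  where "\<And>e. ga_linear G (\<phi> e)" "\<And>e x. x \<in> rad \<Longrightarrow> \<phi> e x = 0" "\<And>e. e \<notin> rad \<Longrightarrow> \<phi> e e = 1"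
proof
  let ?P = "\<lambda>e l. ga_linear G l \<and> (\<forall>x\<in>rad. l x = 0) \<and> l e = 1"
  define \<phi> where "\<phi> e = (if e \<in> rad then (\<lambda>_. 0) else Eps (?P e))" for e :: "'a \<Rightarrow> 'k"
  have "?P e (\<phi> e)" if "e \<notin> rad" for e
    using someI_ex[OF rad_separating_functional[OF that]] that by (simp add: \<phi>_def)
  then show "ga_linear G (\<phi> e)" "x \<in> rad \<Longrightarrow> \<phi> e x = 0" "e \<notin> rad \<Longrightarrow> \<phi> e e = 1" for e x
    by (cases "e \<in> rad"; simp add: \<phi>_def ga_linear_def)+
qed

lemma ga_linear_sandwich_sum:
  fixes \<phi> :: "('a \<Rightarrow> 'k::field) \<Rightarrow> ('a \<Rightarrow> 'k) \<Rightarrow> 'k"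
  assumes "\<And>e. ga_linear G (\<phi> e)"
  shows "ga_linear G (\<lambda>x. \<Sum>e\<in>E. \<phi> e (e \<star> (x \<star> e)))"
  unfolding ga_linear_def
proof (intro conjI ballI allI)
  fix a b :: "'a \<Rightarrow> 'k"
  have "(\<lambda>g. a g + b g) = a + b"
    by (simp add: plus_fun_def)
  then show "(\<Sum>e\<in>E. \<phi> e (e \<star> ((\<lambda>g. a g + b g) \<star> e))) =
      (\<Sum>e\<in>E. \<phi> e (e \<star> (a \<star> e))) + (\<Sum>e\<in>E. \<phi> e (e \<star> (b \<star> e)))"
    by (simp add: ga_mult_add_left ga_mult_add_right ga_linear_add[OF assms] sum.distrib)
next
  fix c and a :: "'a \<Rightarrow> 'k"
  show "(\<Sum>e\<in>E. \<phi> e (e \<star> ((\<lambda>g. c * a g) \<star> e))) = c * (\<Sum>e\<in>E. \<phi> e (e \<star> (a \<star> e)))"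
    by (simp add: ga_mult_scale_left ga_mult_scale_right ga_linear_scale[OF assms] sum_distrib_left)
qed

lemma primitive_decomposition_sandwich:
  assumes E: "primitive_decomposition E unit" and r: "r \<in> KG" "r \<notin> rad"
  shows "\<exists>e\<in>E. \<exists>e'\<in>E. e \<star> (r \<star> e') \<notin> rad"
proof (rule ccontr)
  assume "\<not> ?thesis"
  then have sandwiches: "(\<Sum>e\<in>E. \<Sum>e'\<in>E. e \<star> (r \<star> e')) \<in> rad"
    by (intro rad_sum) blast
  define j where "j = (\<Sum>E) - unit"
  have j: "j \<in> rad"
    using E by (simp add: j_def primitive_decomposition_def)
  have "(\<Sum>e\<in>E. \<Sum>e'\<in>E. e \<star> (r \<star> e')) = (\<Sum>E) \<star> (r \<star> (\<Sum>E))"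
    by (simp add: ga_mult_sum_left ga_mult_sum_right) (rule sum.swap)
  also have "\<dots> = r + (r \<star> j + j \<star> (r \<star> (\<Sum>E)))"
    using r(1) by (simp add: j_def ga_mult_diff_left ga_mult_diff_right algebra_simps)
  finally have "r = (\<Sum>e\<in>E. \<Sum>e'\<in>E. e \<star> (r \<star> e')) - (r \<star> j + j \<star> (r \<star> (\<Sum>E)))"
    by simp
  also have "\<dots> \<in> rad"
    using sandwiches j by (intro rad_diff rad_add rad_mult_left rad_mult_right)
  finally show False
    using r(2) by simp
qed

lemma primitive_decomposition_witness:
  assumes E: "primitive_decomposition E unit" and r: "r \<in> KG" "r \<notin> rad"
  obtains e b where "e \<in> E" "e \<notin> rad" "e \<star> ((r \<star> b) \<star> e) - e \<in> rad" "\<forall>k\<in>E - {e}. (r \<star> b) \<star> k \<in> rad"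
proof -
  obtain e e' where e: "e \<in> E" "e' \<in> E" "e \<star> (r \<star> e') \<notin> rad"
    using primitive_decomposition_sandwich[OF E r] by blast
  have idem: "e \<star> e - e \<in> rad" and orth: "\<forall>k\<in>E - {e}. e \<star> k \<in> rad"
    and generates: "\<forall>y\<in>KG. e \<star> y \<notin> rad \<longrightarrow> (\<exists>b\<in>KG. e \<star> (y \<star> b) - e \<in> rad)"
    using E e(1) by (auto simp: primitive_decomposition_def primitive_mod_rad_def)
  obtain b' where "e \<star> ((r \<star> e') \<star> b') - e \<in> rad"
    using generates e(3) ga_mult_closed by blast
  then have X: "e \<star> (r \<star> (e' \<star> b')) - e \<in> rad"
    by simp
  define b where "b = e' \<star> (b' \<star> e)"
  show thesis
  proof (rule that[of e b])
    show "e \<notin> rad"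
      using e(3) rad_mult_right by blast
    let ?X = "e \<star> (r \<star> (e' \<star> b'))"
    have "e \<star> ((r \<star> b) \<star> e) - e = ?X \<star> (e \<star> e - e) + (?X - e) \<star> e + (e \<star> e - e)"
      by (simp add: b_def ga_mult_diff_left ga_mult_diff_right algebra_simps)
    also have "\<dots> \<in> rad"
      using idem X by (intro rad_add rad_mult_left rad_mult_right)
    finally show "e \<star> ((r \<star> b) \<star> e) - e \<in> rad" .
    show "\<forall>k\<in>E - {e}. (r \<star> b) \<star> k \<in> rad"
      using orth rad_mult_left[of _ "r \<star> (e' \<star> b')"] by (simp add: b_def)
  qed (fact e(1))
qed

lemma sandwich_sum_witness:
  fixes \<phi> :: "('a \<Rightarrow> 'k::field) \<Rightarrow> ('a \<Rightarrow> 'k) \<Rightarrow> 'k"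
  assumes E: "E \<subseteq> KG" "primitive_decomposition E unit"
    and \<phi>_linear: "\<And>e. ga_linear G (\<phi> e)" and \<phi>_rad: "\<And>e x. x \<in> rad \<Longrightarrow> \<phi> e x = 0"
    and \<phi>_one: "\<And>e. e \<notin> rad \<Longrightarrow> \<phi> e e = 1"
    and r: "r \<in> KG" "r \<notin> rad"
  obtains b where "(\<Sum>k\<in>E. \<phi> k (k \<star> ((r \<star> b) \<star> k))) = 1"
proof -
  obtain e b where e: "e \<in> E" "e \<notin> rad" "e \<star> ((r \<star> b) \<star> e) - e \<in> rad"
    and others: "\<forall>k\<in>E - {e}. (r \<star> b) \<star> k \<in> rad"
    using primitive_decomposition_witness[OF E(2) r] by blast
  have "(\<Sum>k\<in>E. \<phi> k (k \<star> ((r \<star> b) \<star> k))) = (\<Sum>k\<in>E. if k = e then 1 else 0)"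
  proof (rule sum.cong)
    fix k assume "k \<in> E"
    show "\<phi> k (k \<star> ((r \<star> b) \<star> k)) = (if k = e then 1 else 0)"
    proof (cases "k = e")
      case True
      then show ?thesis
        using ga_linear_cong[OF \<phi>_linear ballI[OF \<phi>_rad] e(3)] \<phi>_one[OF e(2)] e(1) E(1) by auto
    next
      case False
      then have "(r \<star> b) \<star> k \<in> rad"
        using others \<open>k \<in> E\<close> by blast
      with False show ?thesis
        using \<phi>_rad[OF rad_mult_left] by simp
    qed
  qed simp
  also have "\<dots> = 1"
    using E(2) e(1) by (simp add: primitive_decomposition_def)
  finally show thesis
    by (rule that)
qed

lemma right_frobenius_form_rad:
  "\<exists>l. right_frobenius_form G (rad :: ('a \<Rightarrow> 'k::{field,finite}) set) l"
proof -
  have "\<forall>x\<in>KG. unit \<star> x - x \<in> (rad :: ('a \<Rightarrow> 'k) set)"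
    by (simp add: rad_zero)
  then obtain E :: "('a \<Rightarrow> 'k) set" where E: "E \<subseteq> KG" "primitive_decomposition E unit"
    using primitive_decomposition_exists[OF ga_right_ideal_carrier rad_subset] ga_carrier_delta one_closed
    by blast
  obtain \<phi> :: "('a \<Rightarrow> 'k) \<Rightarrow> ('a \<Rightarrow> 'k) \<Rightarrow> 'k" where \<phi>_linear: "\<And>e. ga_linear G (\<phi> e)"
    and \<phi>_rad: "\<And>e x. x \<in> rad \<Longrightarrow> \<phi> e x = 0" and \<phi>_one: "\<And>e. e \<notin> rad \<Longrightarrow> \<phi> e e = 1"
    using rad_separating_functionals by metis
  define l where "l x = (\<Sum>e\<in>E. \<phi> e (e \<star> (x \<star> e)))" for x
  have "ga_linear G l"
    unfolding l_def[abs_def] by (rule ga_linear_sandwich_sum[OF \<phi>_linear])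
  moreover have "\<forall>c\<in>rad. l c = 0"
    by (simp add: l_def \<phi>_rad rad_mult_left rad_mult_right)
  moreover have "L = rad" if L: "ga_right_ideal G L" "rad \<subseteq> L" "\<forall>a\<in>L. l a = 0" for L
  proof (rule ccontr)
    assume "L \<noteq> rad"
    then obtain r where r: "r \<in> L" "r \<notin> rad"
      using L(2) by blast
    moreover have "r \<in> KG"
      using r(1) L(1) ga_right_ideal_subset by blast
    ultimately obtain b where "l (r \<star> b) = 1"
      unfolding l_def using sandwich_sum_witness[OF E \<phi>_linear \<phi>_rad \<phi>_one] by blast
    then show False
      using L(3) ga_right_ideal_mult[OF L(1) r(1)] by simp
  qed
  ultimately show ?thesis
    unfolding right_frobenius_form_def by blast
qed

end

theorem mainTheorem8:
  fixes G :: "('g, 'b) monoid_scheme" and C :: "('g \<Rightarrow> 'k::{field,finite}) set"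
  assumes "group G" and "finite (carrier G)"
    and "ga_ideal G C" and "frobenius_quotient G C"
  shows "checkable G C \<and> checkable G (ga_jacobson G :: ('g \<Rightarrow> 'k) set)"
proof -
  interpret group_algebra G
    using assms(1,2) by (simp add: group_algebra_def group_algebra_axioms_def)
  have "ga_right_ideal G C"
    using assms(3) by (simp add: ga_ideal_def)
  moreover obtain l where "right_frobenius_form G C l"
    using right_frobenius_form_if_frobenius_quotient[OF assms(4)] by blast
  ultimately have "checkable G C"
    by (rule checkable_if_right_frobenius_form)
  moreover obtain l' where "right_frobenius_form G (ga_jacobson G :: ('g \<Rightarrow> 'k) set) l'"
    using right_frobenius_form_rad by blast
  then have "checkable G (ga_jacobson G :: ('g \<Rightarrow> 'k) set)"
    by (rule checkable_if_right_frobenius_form[OF ga_right_ideal_rad])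
  ultimately show ?thesis
    by blast
qed

end
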